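(* Let $m\ge1$ and suppose $u=u_1\ldots u_n\in[m]^*$ is weakly increasing ($u_1\le\cdots\le u_n$). Then $$S(u;x_1,\ldots,x_m)=\frac{\prod_{i=1}^n\sum_{j=u_i}^m x_j}{\left(1+\sum_{i=1}^{n-1}\prod_{j=i+1}^n\sum_{l=u_j}^m x_l\right)\left(1-\sum_{i=1}^m x_i\right)+\prod_{i=1}^n\sum_{j=u_i}^m x_j}.$$
   Context: $[m]^*$ is the set of finite words over $[m]=\{1,\ldots,m\}$ with the usual order. An embedding of $u$ into $w$ is a string of $|u|$ consecutive letters of $w$ whose $i$-th letter is $\ge$ the $i$-th letter of $u$ for every $i$. $\mathcal{S}(u)$ is the set of words $w$ admitting an embedding of $u$ such that the last $|u|$ letters of $w$ form the only embedding of $u$ into $w$. For $w\in[m]^*$, $c_i(w)$ is the number of occurrences of $i$ in $w$ and $W_{[m]}(w)=\prod_{i=1}^m x_i^{c_i(w)}$. $S(u;x_1,\ldots,x_m)=\sum_{w\in\mathcal{S}(u)\cap[m]^*}W_{[m]}(w)$. *)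

theory Defs
  imports "HOL-Analysis.Analysis"
begin

definition embeds_at :: "nat list \<Rightarrow> nat list \<Rightarrow> nat \<Rightarrow> bool" where
  "embeds_at u w k \<longleftrightarrow> k + length u \<le> length w \<and> (\<forall>i<length u. u ! i \<le> w ! (k + i))"

definition words :: "nat \<Rightarrow> nat list set" where
  "words m = {w. set w \<subseteq> {1..m}}"

definition Sset :: "nat list \<Rightarrow> nat list set" where
  "Sset u = {w. embeds_at u w (length w - length u) \<and> length u \<le> length w \<and>
                (\<forall>k. embeds_at u w k \<longrightarrow> k = length w - length u)}"

definition weight :: "nat \<Rightarrow> (nat \<Rightarrow> real) \<Rightarrow> nat list \<Rightarrow> real" where
  "weight m x w = (\<Prod>i\<in>{1..m}. x i ^ count_list w i)"

end

theory Submission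
  imports Defs
begin

text \<open>
  For words over [m] let a(k) be the total weight of the length-k words
  avoiding u (admitting no embedding of u), s(k) that of the length-k words of \<S>(u), and
  D(r) that of the words dominating the last |u|-r letters of u, so that D(r) is a product
  of sums of the x_l. Two counting identities hold:
  (1) a(k+1) + s(k+1) = (x_1+\<dots>+x_m) a(k): a u-avoiding word extended by one letter
      either still avoids u or becomes a word of \<S>(u);
  (2) for weakly increasing u, a(j) D(0) = \<Sum>_{r=1}^{|u|} s(j+r) D(r): cutting a word
      (u-avoiding prefix of length j, then |u| letters dominating u) right after its
      leftmost embedding of u is a bijection, and monotonicity of u is what makes the
      glued word dominate u again.
  Summing over all lengths (the series converge since x_1+\<dots>+x_m < 1) turns (1) and (2)
  into two linear equations for A = \<Sum> a(k) and S = \<Sum> s(k), whose solution for S is the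
  claimed rational function; finally S is the weight of \<S>(u) \<inter> [m]^*, split by length.
\<close>

definition words_len :: "nat \<Rightarrow> nat \<Rightarrow> nat list set" where
  "words_len m l = {w. length w = l \<and> set w \<subseteq> {1..m}}"

definition dominates :: "nat list \<Rightarrow> nat list \<Rightarrow> bool" where
  "dominates q v \<longleftrightarrow> length v = length q \<and> (\<forall>i<length q. q!i \<le> v!i)"

definition avoids :: "nat list \<Rightarrow> nat list \<Rightarrow> bool" where
  "avoids u w \<longleftrightarrow> (\<forall>k. \<not> embeds_at u w k)"

lemma finite_words_len: "finite (words_len m l)"
  using finite_lists_length_eq[of "{1..m}" l] by (simp add: words_len_def conj_commute)

lemma weight_append: "weight m x (w @ v) = weight m x w * weight m x v"
  unfolding weight_def by (simp add: power_add prod.distrib)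

lemma weight_Nil: "weight m x [] = 1"
  by (simp add: weight_def)

lemma weight_single: "c \<in> {1..m} \<Longrightarrow> weight m x [c] = x c"
  unfolding weight_def by (simp add: if_distrib[of "power (x _)"] cong: if_cong)

lemma weight_nonneg: "\<forall>i\<in>{1..m}. x i \<ge> 0 \<Longrightarrow> weight m x w \<ge> 0"
  unfolding weight_def by (intro prod_nonneg) auto

lemma sum_weight_concat:
  "(\<Sum>w\<in>{w\<in>words_len m (j+l). P (take j w) \<and> Q (drop j w)}. weight m x w) =
   (\<Sum>w\<in>{w\<in>words_len m j. P w}. weight m x w) * (\<Sum>v\<in>{v\<in>words_len m l. Q v}. weight m x v)"
proof -
  let ?A = "{w\<in>words_len m j. P w}" and ?B = "{v\<in>words_len m l. Q v}"
  let ?cat = "\<lambda>(a, b). a @ b"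
  have image: "{w\<in>words_len m (j+l). P (take j w) \<and> Q (drop j w)} = ?cat ` (?A \<times> ?B)"
  proof (intro set_eqI iffI)
    fix w assume "w \<in> {w\<in>words_len m (j+l). P (take j w) \<and> Q (drop j w)}"
    hence "(take j w, drop j w) \<in> ?A \<times> ?B"
      using set_take_subset[of j w] set_drop_subset[of j w] by (auto simp: words_len_def)
    moreover have "w = ?cat (take j w, drop j w)" by simp
    ultimately show "w \<in> ?cat ` (?A \<times> ?B)" by (rule rev_image_eqI)
  next
    fix w assume "w \<in> ?cat ` (?A \<times> ?B)"
    then obtain a b where "w = a @ b" "a \<in> ?A" "b \<in> ?B" by auto
    thus "w \<in> {w\<in>words_len m (j+l). P (take j w) \<and> Q (drop j w)}"
      by (simp add: words_len_def)
  qed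
  have inj: "inj_on ?cat (?A \<times> ?B)"
  proof (rule inj_onI)
    fix p q assume "p \<in> ?A \<times> ?B" "q \<in> ?A \<times> ?B" "?cat p = ?cat q"
    thus "p = q" by (cases p; cases q) (simp add: words_len_def append_eq_append_conv)
  qed
  have "(\<Sum>w\<in>?cat ` (?A \<times> ?B). weight m x w) = (\<Sum>p\<in>?A \<times> ?B. weight m x (fst p @ snd p))"
    by (subst sum.reindex[OF inj]) (simp add: case_prod_beta)
  also have "\<dots> = (\<Sum>a\<in>?A. \<Sum>b\<in>?B. weight m x a * weight m x b)"
    by (simp add: sum.cartesian_product weight_append case_prod_beta)
  also have "\<dots> = (\<Sum>w\<in>?A. weight m x w) * (\<Sum>v\<in>?B. weight m x v)"
    by (simp add: sum_product)
  finally show ?thesis unfolding image .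
qed

lemma sum_weight_letters:
  "(\<Sum>w\<in>{w\<in>words_len m 1. P w}. weight m x w) = (\<Sum>c\<in>{c\<in>{1..m}. P [c]}. x c)"
proof -
  have "{w\<in>words_len m 1. P w} = (\<lambda>c. [c]) ` {c\<in>{1..m}. P [c]}"
    by (auto simp: words_len_def length_Suc_conv)
  thus ?thesis by (simp add: sum.reindex inj_on_def weight_single)
qed

lemma sum_weight_dominating:
  "set q \<subseteq> {1..m} \<Longrightarrow>
   (\<Sum>v\<in>{v\<in>words_len m (length q). dominates q v}. weight m x v) = (\<Prod>i<length q. \<Sum>j=q!i..m. x j)"
proof (induction q)
  case Nil
  have "{v\<in>words_len m 0. dominates [] v} = {[]}" by (auto simp: words_len_def dominates_def)
  thus ?case by (simp add: weight_Nil)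
next
  case (Cons a q)
  have split: "dominates (a#q) v \<longleftrightarrow> dominates [a] (take 1 v) \<and> dominates q (drop 1 v)"
    if "length v = 1 + length q" for v
    using that by (cases v) (auto simp: dominates_def nth_Cons split: nat.splits)
  have "(\<Sum>v\<in>{v\<in>words_len m (length (a#q)). dominates (a#q) v}. weight m x v) =
        (\<Sum>v\<in>{v\<in>words_len m (1 + length q). dominates [a] (take 1 v) \<and> dominates q (drop 1 v)}. weight m x v)"
    using split by (intro sum.cong) (auto simp: words_len_def)
  also have "\<dots> = (\<Sum>c\<in>{c\<in>{1..m}. dominates [a] [c]}. x c) *
      (\<Sum>v\<in>{v\<in>words_len m (length q). dominates q v}. weight m x v)"
    by (simp only: sum_weight_concat sum_weight_letters)
  also have "{c\<in>{1..m}. dominates [a] [c]} = {a..m}"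
    using Cons.prems by (auto simp: dominates_def)
  finally show ?case
    using Cons by (simp add: prod.lessThan_Suc_shift del: prod.lessThan_Suc)
qed

lemma embeds_at_take: "embeds_at u (take L w) k \<longleftrightarrow> k + length u \<le> L \<and> embeds_at u w k"
  unfolding embeds_at_def by auto

lemma avoids_take: "avoids u w \<Longrightarrow> avoids u (take L w)"
  unfolding avoids_def by (simp add: embeds_at_take)

lemma avoids_not_Sset: "avoids u w \<Longrightarrow> w \<notin> Sset u"
  unfolding avoids_def Sset_def by blast

text \<open>No proper prefix of a word of \<S>(u) contains an embedding of u, since such an
  embedding would be a second embedding into the word.\<close>
lemma Sset_prefix_avoids:
  assumes "w \<in> Sset u" "j < length w"
  shows "avoids u (take j w)"
  using assms unfolding avoids_def Sset_def by (force simp: embeds_at_take)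

text \<open>A word has at most one prefix in \<S>(u): the shorter one would give an
  embedding into the longer one that does not end at its end.\<close>
lemma Sset_prefix_unique:
  assumes "take a w \<in> Sset u" "take b w \<in> Sset u" "a \<le> length w" "b \<le> length w"
  shows "a = b"
proof (rule ccontr)
  assume "a \<noteq> b"
  have *: False if "a' < b'" "take a' w \<in> Sset u" "take b' w \<in> Sset u" "b' \<le> length w" for a' b'
  proof -
    have "embeds_at u w (a' - length u)" "length u \<le> a'"
      using that by (auto simp: Sset_def embeds_at_take min_def split: if_splits)
    hence "embeds_at u (take b' w) (a' - length u)"
      using that by (simp add: embeds_at_take)
    hence "a' - length u = b' - length u"
      using that by (auto simp: Sset_def)
    thus False using that \<open>length u \<le> a'\<close> by simp
  qed
  show False
    using \<open>a \<noteq> b\<close> *[of a b] *[of b a] assms by (cases "a < b") auto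
qed

lemma avoids_butlast_iff:
  assumes "length w = Suc k"
  shows "avoids u (take k w) \<longleftrightarrow> avoids u w \<or> w \<in> Sset u"
proof
  assume av: "avoids u (take k w)"
  have last: "e = length w - length u \<and> length u \<le> length w" if "embeds_at u w e" for e
  proof -
    have "\<not> e + length u \<le> k" "e + length u \<le> length w"
      using av that unfolding avoids_def embeds_at_take by (auto simp: embeds_at_def)
    thus ?thesis using assms by simp
  qed
  show "avoids u w \<or> w \<in> Sset u"
    using last unfolding avoids_def Sset_def by auto
next
  assume "avoids u w \<or> w \<in> Sset u"
  thus "avoids u (take k w)"
    using avoids_take Sset_prefix_avoids[of w u k] assms by auto
qed

lemma take_first_embedding_Sset:
  assumes "embeds_at u w e" and first: "\<And>k. embeds_at u w k \<Longrightarrow> e \<le> k"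
  shows "take (e + length u) w \<in> Sset u"
proof -
  have len: "length (take (e + length u) w) = e + length u"
    using assms(1) by (simp add: embeds_at_def)
  show ?thesis
    unfolding Sset_def using assms len by (force simp: embeds_at_take)
qed

lemma dominates_drop: "dominates q v \<Longrightarrow> dominates (drop r q) (drop r v)"
  unfolding dominates_def by (simp add: add.commute)

lemma split_at_first_embedding:
  assumes len: "length w = j + length u" and av: "avoids u (take j w)"
    and dom: "dominates u (drop j w)"
  shows "\<exists>r\<in>{1..length u}. take (j+r) w \<in> Sset u \<and> dominates (drop r u) (drop (j+r) w)"
proof -
  have "embeds_at u w j"
    using len dom unfolding embeds_at_def dominates_def by auto
  define e where "e = (LEAST k. embeds_at u w k)"
  have e: "embeds_at u w e" and first: "\<And>k. embeds_at u w k \<Longrightarrow> e \<le> k"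
    unfolding e_def using \<open>embeds_at u w j\<close> by (auto intro: LeastI Least_le)
  have "e \<le> j" using first \<open>embeds_at u w j\<close> .
  moreover have "\<not> e + length u \<le> j"
    using av e unfolding avoids_def by (auto simp: embeds_at_take)
  ultimately obtain r where r: "r \<in> {1..length u}" "j + r = e + length u"
    by (intro that[of "e + length u - j"]) auto
  have "take (j+r) w \<in> Sset u"
    using take_first_embedding_Sset[OF e first] r(2) by simp
  moreover have "dominates (drop r u) (drop (j+r) w)"
    using dominates_drop[OF dom, of r] by (simp add: add.commute)
  ultimately show ?thesis using r(1) by blast
qed

text \<open>Conversely, for weakly increasing u, a word of \<S>(u) of length j+r (1 \<le> r \<le> |u|)
  followed by a word dominating the last |u|-r letters of u dominates u in its last |u|
  letters: positions covered by the final embedding of u into the prefix dominate a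
  letter of u that is at least as large, by monotonicity of u.\<close>
lemma join_at_first_embedding:
  assumes s: "sorted u" and len: "length w = j + length u" and r: "r \<in> {1..length u}"
    and S: "take (j+r) w \<in> Sset u" and dom: "dominates (drop r u) (drop (j+r) w)"
  shows "dominates u (drop j w)"
  unfolding dominates_def
proof (intro conjI allI impI)
  show "length (drop j w) = length u" using len by simp
  fix i assume i: "i < length u"
  show "u ! i \<le> drop j w ! i"
  proof (cases "r \<le> i")
    case True
    have "drop r u ! (i - r) \<le> drop (j+r) w ! (i - r)"
      using dom i True unfolding dominates_def by (metis length_drop diff_less_mono)
    moreover have "j + r + (i - r) = j + i" using True by simp
    ultimately show ?thesis using True i len by simp
  next
    case False
    \<comment> \<open>position j+i is matched with letter q = |u|-r+i of the final embedding\<close>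
    define q where "q = length u - r + i"
    have q: "q < length u" "i \<le> q" "j + r - length u + q = j + i"
      using False r i S len unfolding q_def Sset_def by auto
    have "embeds_at u (take (j+r) w) (j + r - length u)"
      using S r len unfolding Sset_def by simp
    hence "u ! q \<le> take (j+r) w ! (j + r - length u + q)"
      using q(1) unfolding embeds_at_def by blast
    also have "\<dots> = drop j w ! i" using q(3) False len by simp
    finally show ?thesis
      using s q(1,2) by (meson order.trans sorted_iff_nth_mono)
  qed
qed

definition avoid_weight :: "nat \<Rightarrow> nat list \<Rightarrow> (nat \<Rightarrow> real) \<Rightarrow> nat \<Rightarrow> real" where
  "avoid_weight m u x k = (\<Sum>w\<in>{w\<in>words_len m k. avoids u w}. weight m x w)"

definition first_weight :: "nat \<Rightarrow> nat list \<Rightarrow> (nat \<Rightarrow> real) \<Rightarrow> nat \<Rightarrow> real" where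
  "first_weight m u x k = (\<Sum>w\<in>{w\<in>words_len m k. w \<in> Sset u}. weight m x w)"

definition dom_weight :: "nat \<Rightarrow> nat list \<Rightarrow> (nat \<Rightarrow> real) \<Rightarrow> nat \<Rightarrow> real" where
  "dom_weight m u x r = (\<Sum>v\<in>{v\<in>words_len m (length u - r). dominates (drop r u) v}. weight m x v)"

lemma avoid_weight_0: "u \<noteq> [] \<Longrightarrow> avoid_weight m u x 0 = 1"
proof -
  assume "u \<noteq> []"
  hence "{w\<in>words_len m 0. avoids u w} = {[]}"
    by (auto simp: words_len_def avoids_def embeds_at_def)
  thus ?thesis by (simp add: avoid_weight_def weight_Nil)
qed

lemma first_weight_short: "k < length u \<Longrightarrow> first_weight m u x k = 0"
  unfolding first_weight_def Sset_def words_len_def by (auto intro: sum.neutral)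

lemma dom_weight_prod:
  assumes "set u \<subseteq> {1..m}" "r \<le> length u"
  shows "dom_weight m u x r = (\<Prod>j\<in>{r..<length u}. \<Sum>l=u!j..m. x l)"
proof -
  have "set (drop r u) \<subseteq> {1..m}" using assms(1) by (meson order.trans set_drop_subset)
  hence "dom_weight m u x r = (\<Prod>i<length u - r. \<Sum>l=u!(r+i)..m. x l)"
    unfolding dom_weight_def using sum_weight_dominating[of "drop r u" m x] assms(2) by simp
  also have "\<dots> = (\<Prod>j\<in>{r..<length u}. \<Sum>l=u!j..m. x l)"
    using prod.shift_bounds_nat_ivl[of "\<lambda>j. \<Sum>l=u!j..m. x l" 0 r "length u - r"] assms(2)
    by (simp add: lessThan_atLeast0 add.commute)
  finally show ?thesis .
qed

lemma avoid_first_recurrence: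
  "avoid_weight m u x (Suc k) + first_weight m u x (Suc k) = (\<Sum>i=1..m. x i) * avoid_weight m u x k"
proof -
  let ?ext = "{w\<in>words_len m (k+1). avoids u (take k w) \<and> True}"
  have "?ext = {w\<in>words_len m (Suc k). avoids u w} \<union> {w\<in>words_len m (Suc k). w \<in> Sset u}"
    using avoids_butlast_iff[of _ k u] by (auto simp: words_len_def)
  hence "avoid_weight m u x (Suc k) + first_weight m u x (Suc k) = (\<Sum>w\<in>?ext. weight m x w)"
    unfolding avoid_weight_def first_weight_def using finite_words_len avoids_not_Sset
    by (subst sum.union_disjoint[symmetric]) auto
  also have "\<dots> = avoid_weight m u x k * (\<Sum>c\<in>{c\<in>{1..m}. True}. x c)"
    unfolding avoid_weight_def by (subst sum_weight_concat, subst sum_weight_letters) (rule refl)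
  also have "{c\<in>{1..m}. True} = {1..m}" by blast
  finally show ?thesis by (simp add: mult.commute)
qed

text \<open>The key identity for weakly increasing u, obtained by cutting words at their
  leftmost embedding of u: a(j) D(0) = \<Sum>_{r=1}^{|u|} s(j+r) D(r).\<close>
lemma avoid_dom_convolution:
  assumes s: "sorted u"
  shows "avoid_weight m u x j * dom_weight m u x 0 =
         (\<Sum>r\<in>{1..length u}. first_weight m u x (j+r) * dom_weight m u x r)"
proof -
  let ?n = "length u"
  define R where "R r = {w\<in>words_len m (j+?n). take (j+r) w \<in> Sset u \<and> dominates (drop r u) (drop (j+r) w)}" for r
  have "avoid_weight m u x j * dom_weight m u x 0 =
      (\<Sum>w\<in>{w\<in>words_len m (j+?n). avoids u (take j w) \<and> dominates u (drop j w)}. weight m x w)"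
    unfolding avoid_weight_def dom_weight_def by (simp add: sum_weight_concat)
  also have "{w\<in>words_len m (j+?n). avoids u (take j w) \<and> dominates u (drop j w)} = (\<Union>r\<in>{1..?n}. R r)"
  proof (intro set_eqI iffI)
    fix w assume "w \<in> {w\<in>words_len m (j+?n). avoids u (take j w) \<and> dominates u (drop j w)}"
    thus "w \<in> (\<Union>r\<in>{1..?n}. R r)"
      using split_at_first_embedding[of w j u] unfolding R_def words_len_def by auto
  next
    fix w assume "w \<in> (\<Union>r\<in>{1..?n}. R r)"
    then obtain r where r: "r \<in> {1..?n}" and w: "w \<in> R r" by blast
    hence "avoids u (take j (take (j+r) w))"
      by (intro Sset_prefix_avoids) (auto simp: R_def words_len_def)
    thus "w \<in> {w\<in>words_len m (j+?n). avoids u (take j w) \<and> dominates u (drop j w)}"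
      using join_at_first_embedding[OF s _ r, of w] w unfolding R_def words_len_def by auto
  qed
  also have "(\<Sum>w\<in>(\<Union>r\<in>{1..?n}. R r). weight m x w) = (\<Sum>r\<in>{1..?n}. \<Sum>w\<in>R r. weight m x w)"
  proof (rule sum.UNION_disjoint)
    show "\<forall>r\<in>{1..?n}. finite (R r)" unfolding R_def using finite_words_len by auto
    show "\<forall>r\<in>{1..?n}. \<forall>r'\<in>{1..?n}. r \<noteq> r' \<longrightarrow> R r \<inter> R r' = {}"
      using Sset_prefix_unique unfolding R_def words_len_def by fastforce
  qed simp
  also have "\<dots> = (\<Sum>r\<in>{1..?n}. first_weight m u x (j+r) * dom_weight m u x r)"
  proof (rule sum.cong)
    fix r assume "r \<in> {1..?n}"
    hence "R r = {w\<in>words_len m ((j+r) + (?n - r)). take (j+r) w \<in> Sset u \<and> dominates (drop r u) (drop (j+r) w)}"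
      unfolding R_def by simp
    thus "(\<Sum>w\<in>R r. weight m x w) = first_weight m u x (j+r) * dom_weight m u x r"
      unfolding first_weight_def dom_weight_def
      using sum_weight_concat[where j="j+r" and l="?n - r" and P="\<lambda>w. w \<in> Sset u"] by simp
  qed simp
  finally show ?thesis .
qed


lemma avoid_weight_nonneg: "\<forall>i\<in>{1..m}. x i \<ge> 0 \<Longrightarrow> avoid_weight m u x k \<ge> 0"
  unfolding avoid_weight_def by (intro sum_nonneg weight_nonneg)

lemma first_weight_nonneg: "\<forall>i\<in>{1..m}. x i \<ge> 0 \<Longrightarrow> first_weight m u x k \<ge> 0"
  unfolding first_weight_def by (intro sum_nonneg weight_nonneg)

lemma dom_weight_nonneg: "\<forall>i\<in>{1..m}. x i \<ge> 0 \<Longrightarrow> dom_weight m u x r \<ge> 0"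
  unfolding dom_weight_def by (intro sum_nonneg weight_nonneg)

lemma avoid_weight_le:
  assumes x: "\<forall>i\<in>{1..m}. x i \<ge> 0" and "u \<noteq> []"
  shows "avoid_weight m u x k \<le> (\<Sum>i=1..m. x i) ^ k"
proof (induction k)
  case 0 thus ?case using avoid_weight_0[OF \<open>u \<noteq> []\<close>] by simp
next
  case (Suc k)
  have "avoid_weight m u x (Suc k) \<le> (\<Sum>i=1..m. x i) * avoid_weight m u x k"
    using avoid_first_recurrence[of m u x k] first_weight_nonneg[OF x, of u "Suc k"] by linarith
  also have "\<dots> \<le> (\<Sum>i=1..m. x i) * (\<Sum>i=1..m. x i) ^ k"
    using Suc x by (intro mult_left_mono sum_nonneg) auto
  finally show ?case by simp
qed

lemma first_weight_le:
  assumes x: "\<forall>i\<in>{1..m}. x i \<ge> 0" and "u \<noteq> []"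
  shows "first_weight m u x k \<le> (\<Sum>i=1..m. x i) ^ k"
proof (cases k)
  case 0 thus ?thesis using first_weight_short[of k u m x] \<open>u \<noteq> []\<close> by simp
next
  case (Suc k')
  have "first_weight m u x (Suc k') \<le> (\<Sum>i=1..m. x i) * avoid_weight m u x k'"
    using avoid_first_recurrence[of m u x k'] avoid_weight_nonneg[OF x, of u "Suc k'"] by linarith
  also have "\<dots> \<le> (\<Sum>i=1..m. x i) * (\<Sum>i=1..m. x i) ^ k'"
    using avoid_weight_le[OF assms] x by (intro mult_left_mono sum_nonneg) auto
  finally show ?thesis using Suc by simp
qed

lemma summable_weight_sequences:
  assumes x: "\<forall>i\<in>{1..m}. x i \<ge> 0" and "u \<noteq> []" and X: "(\<Sum>i=1..m. x i) < 1"
  shows "summable (avoid_weight m u x)" and "summable (first_weight m u x)"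
proof -
  have "(\<Sum>i=1..m. x i) \<ge> 0" using x by (intro sum_nonneg) auto
  hence geo: "summable (\<lambda>k. (\<Sum>i=1..m. x i) ^ k)"
    using X by (intro summable_geometric) simp
  show "summable (avoid_weight m u x)"
    using avoid_weight_nonneg[OF x] avoid_weight_le[OF x \<open>u \<noteq> []\<close>]
    by (intro summable_comparison_test'[OF geo, of 0]) simp
  show "summable (first_weight m u x)"
    using first_weight_nonneg[OF x] first_weight_le[OF x \<open>u \<noteq> []\<close>]
    by (intro summable_comparison_test'[OF geo, of 0]) simp
qed

lemma suminf_avoid_first_recurrence:
  assumes x: "\<forall>i\<in>{1..m}. x i \<ge> 0" and u: "u \<noteq> []" and X: "(\<Sum>i=1..m. x i) < 1"
  shows "suminf (avoid_weight m u x) - 1 + suminf (first_weight m u x) =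
         (\<Sum>i=1..m. x i) * suminf (avoid_weight m u x)"
proof -
  let ?a = "avoid_weight m u x" and ?s = "first_weight m u x"
  note sa = summable_weight_sequences(1)[OF assms] and ss = summable_weight_sequences(2)[OF assms]
  have "(\<Sum>k. ?a (Suc k)) = suminf ?a - 1"
    using suminf_split_head[OF sa] avoid_weight_0[OF u] by simp
  moreover have "(\<Sum>k. ?s (Suc k)) = suminf ?s"
    using suminf_split_head[OF ss] first_weight_short[of 0 u] u by simp
  moreover have "(\<Sum>k. ?a (Suc k)) + (\<Sum>k. ?s (Suc k)) = (\<Sum>k. (\<Sum>i=1..m. x i) * ?a k)"
    using sa ss by (subst suminf_add) (auto simp: summable_Suc_iff avoid_first_recurrence)
  ultimately show ?thesis using suminf_mult[OF sa] by simp
qed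

lemma suminf_avoid_dom_convolution:
  assumes "sorted u" and x: "\<forall>i\<in>{1..m}. x i \<ge> 0" and u: "u \<noteq> []" and X: "(\<Sum>i=1..m. x i) < 1"
  shows "suminf (avoid_weight m u x) * dom_weight m u x 0 =
         suminf (first_weight m u x) * (\<Sum>r\<in>{1..length u}. dom_weight m u x r)"
proof -
  let ?a = "avoid_weight m u x" and ?s = "first_weight m u x" and ?D = "dom_weight m u x"
  note sa = summable_weight_sequences(1)[OF x u X] and ss = summable_weight_sequences(2)[OF x u X]
  have shift: "(\<Sum>j. ?s (j + r)) = suminf ?s" if "r \<le> length u" for r
  proof -
    have "(\<Sum>i<r. ?s i) = 0" using that first_weight_short by (intro sum.neutral) auto
    thus ?thesis using suminf_split_initial_segment[OF ss, of r] by simp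
  qed
  have "suminf ?a * ?D 0 = (\<Sum>j. \<Sum>r\<in>{1..length u}. ?s (j+r) * ?D r)"
    using suminf_mult2[OF sa] avoid_dom_convolution[OF \<open>sorted u\<close>] by simp
  also have "\<dots> = (\<Sum>r\<in>{1..length u}. \<Sum>j. ?s (j+r) * ?D r)"
    using ss by (intro suminf_sum summable_mult2) (simp add: summable_iff_shift)
  also have "\<dots> = (\<Sum>r\<in>{1..length u}. suminf ?s * ?D r)"
    using ss shift by (intro sum.cong refl) (auto simp: suminf_mult2[symmetric] summable_iff_shift)
  finally show ?thesis by (simp add: sum_distrib_left)
qed

lemma solve_generating_equations:
  fixes A S X P C :: real
  assumes rec: "A - 1 + S = X * A" and conv: "A * P = S * C"
    and "X < 1" "C > 0" "P \<ge> 0"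
  shows "S = P / (C * (1 - X) + P)"
proof -
  have "C * (1 - X) + P > 0" using assms(3-5) by (simp add: add_pos_nonneg)
  moreover have "S * (C * (1 - X) + P) = P"
  proof -
    have "S * (C * (1 - X) + P) = (A * P) * (1 - X) + S * P" using conv by (simp add: algebra_simps)
    also have "\<dots> = P * (A * (1 - X) + S)" by (simp add: algebra_simps)
    also have "A * (1 - X) + S = 1" using rec by (simp add: algebra_simps)
    finally show ?thesis by simp
  qed
  ultimately show ?thesis by (simp add: field_simps)
qed

lemma has_sum_disjoint_Union_nonneg:
  fixes f :: "'a \<Rightarrow> real" and B :: "'i \<Rightarrow> 'a set"
  assumes parts: "\<And>k. (f has_sum g k) (B k)" and total: "(g has_sum T) UNIV"
    and nonneg: "\<And>y. f y \<ge> 0" and disj: "disjoint_family B"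
  shows "(f has_sum T) (\<Union>k. B k)"
proof -
  have inj: "inj_on snd (Sigma UNIV B)"
    using disj unfolding disjoint_family_on_def inj_on_def by auto
  have img: "snd ` Sigma UNIV B = (\<Union>k. B k)" by force
  have "f summable_on (\<Union>k. B k)"
    using parts total nonneg disj by (intro summable_on_UnionI[where g = g]) (auto dest: has_sum_imp_summable)
  hence "(f \<circ> snd) summable_on Sigma UNIV B"
    unfolding img[symmetric] summable_on_reindex[OF inj] .
  hence "((f \<circ> snd) has_sum T) (Sigma UNIV B)"
    using parts total by (intro has_sum_SigmaI[where g = g]) auto
  thus ?thesis
    unfolding img[symmetric] has_sum_reindex[OF inj] .
qed

lemma has_sum_Sset_first_weight:
  assumes x: "\<forall>i\<in>{1..m}. x i \<ge> 0" and u: "u \<noteq> []" and X: "(\<Sum>i=1..m. x i) < 1"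
  shows "(weight m x has_sum suminf (first_weight m u x)) (Sset u \<inter> words m)"
proof -
  define B where "B k = {w\<in>words_len m k. w \<in> Sset u}" for k
  have "Sset u \<inter> words m = (\<Union>k. B k)"
    unfolding B_def words_len_def words_def by auto
  moreover have "(weight m x has_sum suminf (first_weight m u x)) (\<Union>k. B k)"
  proof (rule has_sum_disjoint_Union_nonneg)
    show "(weight m x has_sum first_weight m u x k) (B k)" for k
      unfolding first_weight_def B_def using finite_words_len by (intro has_sum_finite) auto
    show "(first_weight m u x has_sum suminf (first_weight m u x)) UNIV"
      using summable_weight_sequences(2)[OF assms] first_weight_nonneg[OF x]
      by (intro sums_nonneg_imp_has_sum summable_sums) auto
    show "weight m x w \<ge> 0" for w using weight_nonneg[OF x] .
    show "disjoint_family B"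
      unfolding disjoint_family_on_def B_def words_len_def by auto
  qed
  ultimately show ?thesis by simp
qed

text \<open>D(1)+\<dots>+D(|u|) is the factor 1 + \<Sum>_{i=1}^{n-1} \<Prod>_{j=i+1}^{n} \<Sum>_{l\<ge>u_j} x_l of the
  denominator (with 0-based indices); the summand D(|u|) is the empty product 1.\<close>
lemma sum_dom_weight:
  assumes "set u \<subseteq> {1..m}" "u \<noteq> []"
  shows "(\<Sum>r\<in>{1..length u}. dom_weight m u x r) =
         1 + (\<Sum>i\<in>{1..<length u}. \<Prod>j\<in>{i..<length u}. \<Sum>l=u!j..m. x l)"
proof -
  have "{1..length u} = insert (length u) {1..<length u}"
    using assms(2) by (auto simp: Suc_le_eq)
  hence "(\<Sum>r\<in>{1..length u}. dom_weight m u x r) =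
         dom_weight m u x (length u) + (\<Sum>r\<in>{1..<length u}. dom_weight m u x r)"
    by simp
  thus ?thesis using dom_weight_prod[OF assms(1)] by (simp add: add_ac)
qed


theorem theorem9:
  fixes m :: nat and u :: "nat list" and x :: "nat \<Rightarrow> real"
  assumes "m \<ge> 1"
    and "u \<noteq> []"
    and "u \<in> words m"
    and "sorted u"
    and "\<forall>i\<in>{1..m}. x i \<ge> 0"
    and "(\<Sum>i=1..m. x i) < 1"
  shows "((\<lambda>w. weight m x w) has_sum
           ((\<Prod>i<length u. \<Sum>j=u!i..m. x j) /
            ((1 + (\<Sum>i\<in>{1..<length u}. \<Prod>j\<in>{i..<length u}. \<Sum>l=u!j..m. x l))
               * (1 - (\<Sum>i=1..m. x i))
             + (\<Prod>i<length u. \<Sum>j=u!i..m. x j))))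
         (Sset u \<inter> words m)"
proof -
  let ?D = "dom_weight m u x"
  let ?P = "\<Prod>i<length u. \<Sum>j=u!i..m. x j"
  let ?C = "1 + (\<Sum>i\<in>{1..<length u}. \<Prod>j\<in>{i..<length u}. \<Sum>l=u!j..m. x l)"
  have u: "set u \<subseteq> {1..m}" using assms(3) by (simp add: words_def)
  have P: "?D 0 = ?P" using dom_weight_prod[OF u, of 0] by (simp add: lessThan_atLeast0)
  have C: "(\<Sum>r\<in>{1..length u}. ?D r) = ?C" using sum_dom_weight[OF u assms(2)] .
  have "?D (length u) \<le> (\<Sum>r\<in>{1..length u}. ?D r)"
    using assms(2) dom_weight_nonneg[OF assms(5)] by (intro member_le_sum) (auto simp: Suc_le_eq)
  hence "?C > 0" using dom_weight_prod[OF u, of "length u"] C by simp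
  moreover have "?P \<ge> 0" using dom_weight_nonneg[OF assms(5), of u 0] P by simp
  moreover note suminf_avoid_first_recurrence[OF assms(5,2,6)]
  moreover note suminf_avoid_dom_convolution[OF assms(4,5,2,6)]
  ultimately have "suminf (first_weight m u x) = ?P / (?C * (1 - (\<Sum>i=1..m. x i)) + ?P)"
    using assms(6) P C by (intro solve_generating_equations) auto
  thus ?thesis using has_sum_Sset_first_weight[OF assms(5,2,6)] by simp
qed

end
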